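(* Let $C>0$ and $\delta>0$, let $f \in C((0,\infty);(0,\infty))$ be asymptotically increasing with $\lim_{x\to\infty} f(x)/x = \infty$, and let $\psi \in C([-\delta,0];(0,\infty))$. Consider \[ z'(t) = C\int_{t-\delta}^t f(z(s))\,ds, \quad t\ge 0; \qquad z(t)=\psi(t), \quad t\in[-\delta,0]. \] If a solution satisfies $z \in C([-\delta,\infty);(0,\infty))$, then $z$ exhibits superexponential growth, i.e. $z(t)\to\infty$ as $t\to\infty$ and $\lim_{t\to\infty} z(t-\epsilon)/z(t) = 0$ for every $\epsilon>0$.
   Context: "$f$ is asymptotically increasing" means that there is a continuous increasing function $\phi:(0,\infty)\to(0,\infty)$ with $f(x)/\phi(x)\to 1$ as $x\to\infty$. *)

theory Defs
  imports "HOL-Analysis.Analysis"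
begin

definition asymptotically_increasing :: "(real \<Rightarrow> real) \<Rightarrow> bool" where
  "asymptotically_increasing f \<longleftrightarrow>
     (\<exists>\<phi>. continuous_on {0<..} \<phi> \<and> strict_mono_on {0<..} \<phi> \<and>
          (\<forall>x>0. \<phi> x > 0) \<and> ((\<lambda>x. f x / \<phi> x) \<longlongrightarrow> 1) at_top)"

end

theory Submission
  imports Defs
begin

text \<open>Since the integrand is positive, z' \<ge> 0 and z is nondecreasing; as f is bounded below on
  [z(0), \<infinity>), the memory term is bounded below and z grows at least linearly, so z \<rightarrow> \<infinity>.
  Superlinearity then gives f(z(s)) \<ge> K z(s) for large s and any K, and integrating the equation
  twice over a window of length \<eta> \<le> \<delta> yields z(t) \<ge> C K \<eta>^2/4 \<cdot> z(t - \<eta>) eventually. As K is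
  arbitrary, z(t - \<eta>)/z(t) \<rightarrow> 0, and monotonicity of z extends this to every lag \<epsilon> \<ge> \<eta>.\<close>

lemma superlinear_eventually_ge_linear:
  fixes f :: "real \<Rightarrow> real"
  assumes "filterlim (\<lambda>x. f x / x) at_top at_top"
  obtains M where "M > 0" "\<And>x. x \<ge> M \<Longrightarrow> K * x \<le> f x"
proof -
  have "eventually (\<lambda>x. max K 0 \<le> f x / x) at_top"
    using assms unfolding filterlim_at_top by blast
  then obtain M where M: "\<And>x. x \<ge> M \<Longrightarrow> max K 0 \<le> f x / x"
    by (auto simp: eventually_at_top_linorder)
  show thesis
  proof (rule that[of "max M 1"])
    fix x assume x: "x \<ge> max M 1"
    with M[of x] have "K \<le> f x / x" by auto
    with x show "K * x \<le> f x" by (simp add: field_simps)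
  qed simp
qed

lemma superlinear_bounded_below:
  fixes f :: "real \<Rightarrow> real"
  assumes f_cont: "continuous_on {0<..} f" and f_pos: "\<forall>x>0. f x > 0"
    and f_superlin: "filterlim (\<lambda>x. f x / x) at_top at_top" and "a > 0"
  obtains m where "m > 0" "\<And>x. x \<ge> a \<Longrightarrow> m \<le> f x"
proof -
  obtain M where M: "\<And>x. x \<ge> M \<Longrightarrow> 1 * x \<le> f x"
    using superlinear_eventually_ge_linear[OF f_superlin] by blast
  have "\<exists>x\<in>{a..max M a}. \<forall>y\<in>{a..max M a}. f x \<le> f y"
    by (rule continuous_attains_inf) (use \<open>a > 0\<close> in \<open>auto intro!: continuous_on_subset[OF f_cont]\<close>)
  then obtain x0 where x0: "x0 \<in> {a..max M a}" "\<And>y. y \<in> {a..max M a} \<Longrightarrow> f x0 \<le> f y"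
    by blast
  show thesis
  proof (rule that[of "min (f x0) a"])
    show "min (f x0) a > 0" using x0(1) \<open>a > 0\<close> f_pos by auto
    fix x assume "x \<ge> a"
    show "min (f x0) a \<le> f x"
    proof (cases "x \<le> max M a")
      case True
      with x0(2)[of x] \<open>x \<ge> a\<close> show ?thesis by auto
    next
      case False
      then have "M \<le> x" by simp
      with M[of x] \<open>x \<ge> a\<close> show ?thesis by (simp add: min_le_iff_disj)
    qed
  qed
qed

lemma increment_ge_of_derivative_ge:
  fixes z D :: "real \<Rightarrow> real"
  assumes "a \<le> b" and "continuous_on {a..b} z"
    and "\<And>u. a < u \<Longrightarrow> u < b \<Longrightarrow> (z has_real_derivative D u) (at u)"
    and "\<And>u. a < u \<Longrightarrow> u < b \<Longrightarrow> c \<le> D u"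
  shows "c * (b - a) \<le> z b - z a"
proof -
  have "z a - c * a \<le> z b - c * b"
  proof (rule DERIV_nonneg_imp_increasing_open[OF \<open>a \<le> b\<close>])
    fix u assume "a < u" "u < b"
    with assms(3,4) show "\<exists>y. ((\<lambda>x. z x - c * x) has_real_derivative y) (at u) \<and> 0 \<le> y"
      by (intro exI[of _ "D u - c"]) (auto intro!: derivative_eq_intros)
  qed (intro continuous_intros assms(2))
  then show ?thesis by (simp add: algebra_simps)
qed

lemma integral_ge_on_subinterval:
  fixes g :: "real \<Rightarrow> real"
  assumes "continuous_on {p..q} g" and "\<And>s. s \<in> {p..q} \<Longrightarrow> 0 \<le> g s"
    and "p \<le> a" "a \<le> b" "b \<le> q" and "\<And>s. s \<in> {a..b} \<Longrightarrow> c \<le> g s"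
  shows "c * (b - a) \<le> integral {p..q} g"
proof -
  have integrable: "g integrable_on {p..q}"
    by (rule integrable_continuous_interval[OF assms(1)])
  have "c * (b - a) = integral {a..b} (\<lambda>s. c)" using assms by simp
  also have "\<dots> \<le> integral {a..b} g"
    by (rule integral_le) (use assms integrable_on_subinterval[OF integrable] in auto)
  also have "\<dots> \<le> integral {p..q} g"
    by (rule integral_subset_le) (use assms integrable integrable_on_subinterval[OF integrable] in auto)
  finally show ?thesis .
qed

lemma ratio_tendsto_zero_if_dominated:
  fixes g h :: "'a \<Rightarrow> real"
  assumes "eventually (\<lambda>x. 0 < g x) F" and "\<And>A. A > 0 \<Longrightarrow> eventually (\<lambda>x. A * g x \<le> h x) F"
  shows "((\<lambda>x. g x / h x) \<longlongrightarrow> 0) F"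
proof (rule tendstoI)
  fix e :: real assume "e > 0"
  have "2 / e > 0" using \<open>e > 0\<close> by simp
  with assms(1) assms(2)[of "2 / e"] show "eventually (\<lambda>x. dist (g x / h x) 0 < e) F"
  proof (elim eventually_elim2)
    fix x assume g_pos: "0 < g x" and dominated: "2 / e * g x \<le> h x"
    have "0 < 2 / e * g x" using \<open>2 / e > 0\<close> g_pos by simp
    with dominated have "0 < h x" by linarith
    moreover have "2 * g x \<le> e * h x" using dominated \<open>e > 0\<close> by (simp add: field_simps)
    ultimately show "dist (g x / h x) 0 < e" using g_pos by (simp add: dist_real_def field_simps)
  qed
qed

locale superlinear_delay_equation =
  fixes C \<delta> :: real and f z :: "real \<Rightarrow> real"
  assumes C_pos: "C > 0" and delta_pos: "\<delta> > 0"
    and f_cont: "continuous_on {0<..} f" and f_pos: "\<forall>x>0. f x > 0"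
    and f_superlin: "filterlim (\<lambda>x. f x / x) at_top at_top"
    and z_cont: "continuous_on {-\<delta>..} z" and z_pos: "\<forall>t\<ge>-\<delta>. z t > 0"
    and z_ode: "\<forall>t\<ge>0. (z has_real_derivative
                   C * integral {t-\<delta>..t} (\<lambda>s. f (z s))) (at t within {0..})"
begin

definition rate :: "real \<Rightarrow> real" where
  "rate t = C * integral {t-\<delta>..t} (\<lambda>s. f (z s))"

lemma rate_ge:
  assumes "t \<ge> 0" "t - \<delta> \<le> a" "a \<le> b" "b \<le> t" and "\<And>s. s \<in> {a..b} \<Longrightarrow> c \<le> f (z s)"
  shows "C * c * (b - a) \<le> rate t"
proof -
  have "continuous_on {-\<delta>..} (\<lambda>s. f (z s))"
    by (rule continuous_on_compose2[OF f_cont z_cont]) (use z_pos in auto)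
  moreover have "t - \<delta> \<ge> -\<delta>" using assms by simp
  ultimately have "c * (b - a) \<le> integral {t-\<delta>..t} (\<lambda>s. f (z s))"
    using assms f_pos z_pos
    by (intro integral_ge_on_subinterval) (auto intro: continuous_on_subset less_imp_le)
  then show ?thesis
    using C_pos unfolding rate_def by (simp add: mult.assoc)
qed

lemma rate_nonneg:
  assumes "t \<ge> 0" shows "0 \<le> rate t"
proof -
  have "0 < f (z t)" using f_pos z_pos assms delta_pos by simp
  then show ?thesis using rate_ge[of t t t 0] assms delta_pos by simp
qed

lemma has_derivative_rate:
  assumes "u > 0" shows "(z has_real_derivative rate u) (at u)"
proof -
  have "at u within {0..} = at u"
    by (rule at_within_interior) (use assms in simp)
  then show ?thesis using z_ode assms unfolding rate_def by (metis less_imp_le)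
qed

lemma increment_ge:
  assumes "0 \<le> a" "a \<le> b" and "\<And>u. a < u \<Longrightarrow> u < b \<Longrightarrow> c \<le> rate u"
  shows "c * (b - a) \<le> z b - z a"
  using assms delta_pos
  by (intro increment_ge_of_derivative_ge[where D = rate] has_derivative_rate
      continuous_on_subset[OF z_cont]) auto

lemma z_mono: "0 \<le> a \<Longrightarrow> a \<le> b \<Longrightarrow> z a \<le> z b"
  using increment_ge[of a b 0] rate_nonneg by simp

lemma z_ge_linear: obtains c where "c > 0" "\<And>t. t \<ge> \<delta> \<Longrightarrow> c * (t - \<delta>) \<le> z t"
proof -
  have "z 0 > 0" using z_pos delta_pos by simp
  then obtain m where m: "m > 0" "\<And>x. x \<ge> z 0 \<Longrightarrow> m \<le> f x"
    using superlinear_bounded_below[OF f_cont f_pos f_superlin] by blast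
  show thesis
  proof (rule that[of "C * m * \<delta>"])
    show "C * m * \<delta> > 0" using C_pos m(1) delta_pos by simp
    fix t assume "t \<ge> \<delta>"
    have "C * m * \<delta> \<le> rate u" if "\<delta> < u" for u
    proof -
      have "m \<le> f (z s)" if "u - \<delta> \<le> s" for s
        using m(2) z_mono[of 0 s] that \<open>\<delta> < u\<close> by simp
      then show ?thesis using rate_ge[of u "u - \<delta>" u m] that delta_pos by simp
    qed
    then have "C * m * \<delta> * (t - \<delta>) \<le> z t - z \<delta>"
      using \<open>t \<ge> \<delta>\<close> delta_pos by (intro increment_ge) auto
    moreover have "z \<delta> > 0" using z_pos delta_pos by simp
    ultimately show "C * m * \<delta> * (t - \<delta>) \<le> z t" by linarith
  qed
qed

lemma z_tendsto_at_top: "filterlim z at_top at_top"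
proof -
  obtain c where c: "c > 0" "\<And>t. t \<ge> \<delta> \<Longrightarrow> c * (t - \<delta>) \<le> z t"
    using z_ge_linear by blast
  have "filterlim (\<lambda>t. -\<delta> + t) at_top at_top"
    by (rule filterlim_tendsto_add_at_top[OF tendsto_const filterlim_ident])
  then have "filterlim (\<lambda>t. c * (t - \<delta>)) at_top at_top"
    using c(1) by (intro filterlim_tendsto_pos_mult_at_top[OF tendsto_const]) simp_all
  moreover have "eventually (\<lambda>t. c * (t - \<delta>) \<le> z t) at_top"
    using eventually_ge_at_top[of \<delta>] by eventually_elim (rule c(2))
  ultimately show ?thesis by (rule filterlim_at_top_mono)
qed

text \<open>Over [t - \<eta>, t - \<eta>/2] the integrand is at least K z(t - \<eta>), so on [t - \<eta>/2, t] the rate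
  is at least C K z(t - \<eta>) \<eta>/2; one more integration gives the factor C K \<eta>^2/4.\<close>
lemma z_dominates_delayed:
  assumes "0 < \<eta>" "\<eta> \<le> \<delta>" "A > 0"
  shows "eventually (\<lambda>t. A * z (t - \<eta>) \<le> z t) at_top"
proof -
  define K where "K = 4 * A / (C * \<eta>\<^sup>2)"
  obtain M where M: "\<And>x. x \<ge> M \<Longrightarrow> K * x \<le> f x"
    using superlinear_eventually_ge_linear[OF f_superlin] by blast
  obtain T where T: "\<And>t. t \<ge> T \<Longrightarrow> M \<le> z t"
    using z_tendsto_at_top unfolding filterlim_at_top eventually_at_top_linorder by blast
  have "A * z (t - \<eta>) \<le> z t" if t: "t \<ge> max T 0 + \<eta>" for t
  proof -
    have K_pos: "K > 0" using assms C_pos by (simp add: K_def)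
    have "C * (K * z (t - \<eta>)) * (\<eta> / 2) \<le> rate u" if "t - \<eta> / 2 < u" "u < t" for u
    proof -
      have "K * z (t - \<eta>) \<le> f (z s)" if "s \<in> {t - \<eta>..t - \<eta> / 2}" for s
      proof -
        have "K * z (t - \<eta>) \<le> K * z s" using z_mono[of "t - \<eta>" s] that t K_pos by auto
        also have "\<dots> \<le> f (z s)" using M T[of s] that t by auto
        finally show ?thesis .
      qed
      then show ?thesis
        using rate_ge[of u "t - \<eta>" "t - \<eta> / 2" "K * z (t - \<eta>)"] that t assms by simp
    qed
    then have "C * (K * z (t - \<eta>)) * (\<eta> / 2) * (\<eta> / 2) \<le> z t - z (t - \<eta> / 2)"
      using increment_ge[of "t - \<eta> / 2" t] t assms by fastforce
    moreover have "C * (K * z (t - \<eta>)) * (\<eta> / 2) * (\<eta> / 2) = A * z (t - \<eta>)"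
      using assms C_pos by (simp add: K_def power2_eq_square field_simps)
    moreover have "z (t - \<eta> / 2) > 0" using z_pos t assms delta_pos by auto
    ultimately show ?thesis by linarith
  qed
  then show ?thesis unfolding eventually_at_top_linorder by blast
qed

lemma delayed_ratio_tendsto_zero:
  assumes "\<epsilon> > 0"
  shows "((\<lambda>t. z (t - \<epsilon>) / z t) \<longlongrightarrow> 0) at_top"
proof (rule ratio_tendsto_zero_if_dominated)
  show "eventually (\<lambda>t. 0 < z (t - \<epsilon>)) at_top"
    using eventually_ge_at_top[of \<epsilon>] by eventually_elim (use z_pos delta_pos in auto)
  fix A :: real assume "A > 0"
  define \<eta> where "\<eta> = min \<epsilon> \<delta>"
  have \<eta>: "0 < \<eta>" "\<eta> \<le> \<delta>" "\<eta> \<le> \<epsilon>" using assms delta_pos by (auto simp: \<eta>_def)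
  show "eventually (\<lambda>t. A * z (t - \<epsilon>) \<le> z t) at_top"
    using z_dominates_delayed[OF \<eta>(1,2) \<open>A > 0\<close>] eventually_ge_at_top[of \<epsilon>]
  proof eventually_elim
    case (elim t)
    then have "A * z (t - \<epsilon>) \<le> A * z (t - \<eta>)"
      using z_mono[of "t - \<epsilon>" "t - \<eta>"] \<eta> \<open>A > 0\<close> by simp
    with elim show ?case by linarith
  qed
qed

end

theorem lemma6p1:
  fixes C \<delta> :: real and f \<psi> z :: "real \<Rightarrow> real"
  assumes C_pos: "C > 0" and delta_pos: "\<delta> > 0"
    and f_cont: "continuous_on {0<..} f" and f_pos: "\<forall>x>0. f x > 0"
    and f_asym: "asymptotically_increasing f"
    and f_superlin: "filterlim (\<lambda>x. f x / x) at_top at_top"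
    and psi_cont: "continuous_on {-\<delta>..0} \<psi>" and psi_pos: "\<forall>t\<in>{-\<delta>..0}. \<psi> t > 0"
    and z_cont: "continuous_on {-\<delta>..} z" and z_pos: "\<forall>t\<ge>-\<delta>. z t > 0"
    and z_init: "\<forall>t\<in>{-\<delta>..0}. z t = \<psi> t"
    and z_ode: "\<forall>t\<ge>0. (z has_real_derivative
                   C * integral {t-\<delta>..t} (\<lambda>s. f (z s))) (at t within {0..})"
  shows "filterlim z at_top at_top \<and>
         (\<forall>\<epsilon>>0. ((\<lambda>t. z (t - \<epsilon>) / z t) \<longlongrightarrow> 0) at_top)"
proof -
  interpret superlinear_delay_equation C \<delta> f z
    using C_pos delta_pos f_cont f_pos f_superlin z_cont z_pos z_ode
    by unfold_locales
  show ?thesis using z_tendsto_at_top delayed_ratio_tendsto_zero by blast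
qed

end
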